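(* Consider the Distributed Guided Local Search (DGLS) algorithm described in the context, with any manner, evaporation rate and update scope. Then at the beginning of each round, for every pair of neighboring agents $i,j$, the cost modifier held by agent $i$ for the constraint with $j$ equals the transpose of the one held by agent $j$ for the constraint with $i$, i.e. $M_{ij}=M_{ji}^T$.
   Context: A (binary) Distributed Constraint Optimization Problem (DCOP) consists of agents $1,\dots,n$, each controlling one variable $x_i$ with finite domain $D_i$, and binary constraint functions $f_{ij}:D_i\times D_j\to\mathbb{R}_{\ge0}$ with $f_{ji}=f_{ij}^T$; $\mathcal{N}_i$ is the set of neighbors of $i$. Write $\check f_{ij}=\min f_{ij}$, $\hat f_{ij}=\max f_{ij}$. Tables held by agent $i$ are indexed with $i$'s own value first and the neighbor's value second. DGLS is parameterized by a manner (additive or multiplicative), an evaporation rate $\gamma$, and a scope ($cel$, $tab$, $row$, $col$). Each agent $i$ keeps, for each $j\in\mathcal{N}_i$, a cost modifier $M_{ij}$ (a $|D_i|\times|D_j|$ real matrix), initialized to $0$. The effective cost is $\mathrm{EffCost}(d_i,j,d_j)=f_{ij}(d_i,d_j)+M_{ij}(d_i,d_j)$ (additive) or $f_{ij}(d_i,d_j)\cdot[1+M_{ij}(d_i,d_j)]$ (multiplicative). Initially each agent picks a random value $d_i\in D_i$ and sends it to its neighbors. Rounds are synchronous; in each round agent $i$: (1) sets $\bar P_i=\emptyset$ and receives the neighbors' current values $d_j$; (2) computes $d_i^*\in\arg\min_{d\in D_i}\sum_{j\in\mathcal{N}_i}\mathrm{EffCost}(d,j,d_j)$ and gain $\Delta_i=\sum_{j}[\mathrm{EffCost}(d_i,j,d_j)-\mathrm{EffCost}(d_i^*,j,d_j)]$,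 and exchanges gains with neighbors; (3) if $\Delta_i>0$ and $\Delta_i$ is the best improvement among itself and its neighbors, it sets $d_i\gets d_i^*$; otherwise, if no neighbor can improve (all neighbors' gains are $\le 0$), then for each $j\in\mathcal{N}_i$ it declares $f_{ij}$ violated with probability $\eta=\frac{f_{ij}(d_i,d_j)-\check f_{ij}}{\hat f_{ij}-\check f_{ij}}$, and for each violated one adds $j$ to $\bar P_i$ and sends a SYNC message to $j$; (4) lets $\tilde P_i$ be the set of neighbors from which it received SYNC this round; (5) for each $j\in\mathcal{N}_i$: first evaporates, $M_{ij}\gets\gamma M_{ij}$ entrywise, then updates with current values $d_i,d_j$: scope $cel$: if $j\in\bar P_i\cup\tilde P_i$, $M_{ij}(d_i,d_j)\mathrel{+}=1$; scope $tab$: if $j\in\bar P_i\cup\tilde P_i$, all entries of $M_{ij}$ are increased by 1; scope $row$: if $j\in\bar P_i$, $M_{ij}(d_i,d_j')\mathrel{+}=1$ for all $d_j'$; if $j\in\tilde P_i$, $M_{ij}(d_i',d_j)\mathrel{+}=1$ for all $d_i'$; if $j\in\bar P_i\cap\tilde P_i$, $M_{ij}(d_i,d_j)\mathrel{-}=1$; scope $col$: same as $row$ with the roles exchanged (if $j\in\bar P_i$ increment column $d_j$, if $j\in\tilde P_i$ increment row $d_i$, and subtract 1 at $(d_i,d_j)$ if both); (6) sends its value $d_i$ to its neighbors. *)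

theory Defs
  imports Complex_Main
begin

text \<open>Tables are indexed with the holder's
  own value first.\<close>

definition dcop ::
  "'a set \<Rightarrow> ('a \<Rightarrow> 'v set) \<Rightarrow> ('a \<Rightarrow> 'a set) \<Rightarrow> ('a \<Rightarrow> 'a \<Rightarrow> 'v \<Rightarrow> 'v \<Rightarrow> real) \<Rightarrow> bool" where
  "dcop A D N f \<longleftrightarrow> finite A \<and>
     (\<forall>i\<in>A. finite (D i) \<and> D i \<noteq> {} \<and> N i \<subseteq> A \<and> i \<notin> N i) \<and>
     (\<forall>i\<in>A. \<forall>j\<in>N i. i \<in> N j) \<and>
     (\<forall>i\<in>A. \<forall>j\<in>N i. \<forall>x\<in>D i. \<forall>y\<in>D j. f i j x y \<ge> 0 \<and> f j i y x = f i j x y)"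

datatype manner = Additive | Multiplicative
datatype scope = Cel | Tab | Row | Col

type_synonym ('a, 'v) modifiers = "'a \<Rightarrow> 'a \<Rightarrow> 'v \<Rightarrow> 'v \<Rightarrow> real"

definition effcost ::
  "manner \<Rightarrow> ('a \<Rightarrow> 'a \<Rightarrow> 'v \<Rightarrow> 'v \<Rightarrow> real) \<Rightarrow> ('a, 'v) modifiers \<Rightarrow> 'a \<Rightarrow> 'a \<Rightarrow> 'v \<Rightarrow> 'v \<Rightarrow> real" where
  "effcost mn f M i j x y = (case mn of
      Additive \<Rightarrow> f i j x y + M i j x y
    | Multiplicative \<Rightarrow> f i j x y * (1 + M i j x y))"

definition localcost ::
  "manner \<Rightarrow> ('a \<Rightarrow> 'a set) \<Rightarrow> ('a \<Rightarrow> 'a \<Rightarrow> 'v \<Rightarrow> 'v \<Rightarrow> real) \<Rightarrow> ('a, 'v) modifiers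
    \<Rightarrow> ('a \<Rightarrow> 'v) \<Rightarrow> 'a \<Rightarrow> 'v \<Rightarrow> real" where
  "localcost mn N f M d i x = (\<Sum>j\<in>N i. effcost mn f M i j x (d j))"

definition best_values ::
  "manner \<Rightarrow> ('a \<Rightarrow> 'v set) \<Rightarrow> ('a \<Rightarrow> 'a set) \<Rightarrow> ('a \<Rightarrow> 'a \<Rightarrow> 'v \<Rightarrow> 'v \<Rightarrow> real)
    \<Rightarrow> ('a, 'v) modifiers \<Rightarrow> ('a \<Rightarrow> 'v) \<Rightarrow> 'a \<Rightarrow> 'v set" where
  "best_values mn D N f M d i =
     {x \<in> D i. \<forall>y\<in>D i. localcost mn N f M d i x \<le> localcost mn N f M d i y}"

definition gain ::
  "manner \<Rightarrow> ('a \<Rightarrow> 'v set) \<Rightarrow> ('a \<Rightarrow> 'a set) \<Rightarrow> ('a \<Rightarrow> 'a \<Rightarrow> 'v \<Rightarrow> 'v \<Rightarrow> real)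
    \<Rightarrow> ('a, 'v) modifiers \<Rightarrow> ('a \<Rightarrow> 'v) \<Rightarrow> 'a \<Rightarrow> real" where
  "gain mn D N f M d i = localcost mn N f M d i (d i) -
      Min ((localcost mn N f M d i) ` D i)"

definition fmin :: "('a \<Rightarrow> 'v set) \<Rightarrow> ('a \<Rightarrow> 'a \<Rightarrow> 'v \<Rightarrow> 'v \<Rightarrow> real) \<Rightarrow> 'a \<Rightarrow> 'a \<Rightarrow> real" where
  "fmin D f i j = Min {f i j x y | x y. x \<in> D i \<and> y \<in> D j}"

definition fmax :: "('a \<Rightarrow> 'v set) \<Rightarrow> ('a \<Rightarrow> 'a \<Rightarrow> 'v \<Rightarrow> 'v \<Rightarrow> real) \<Rightarrow> 'a \<Rightarrow> 'a \<Rightarrow> real" where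
  "fmax D f i j = Max {f i j x y | x y. x \<in> D i \<and> y \<in> D j}"

text \<open>Violation probability eta (0 when fmax = fmin, by the convention x/0 = 0).\<close>
definition eta :: "('a \<Rightarrow> 'v set) \<Rightarrow> ('a \<Rightarrow> 'a \<Rightarrow> 'v \<Rightarrow> 'v \<Rightarrow> real) \<Rightarrow> 'a \<Rightarrow> 'a \<Rightarrow> 'v \<Rightarrow> 'v \<Rightarrow> real" where
  "eta D f i j x y = (f i j x y - fmin D f i j) / (fmax D f i j - fmin D f i j)"

text \<open>Step (5): evaporation followed by the scope-dependent update of M_ij, for
  agent i and neighbour j, with own current value di, neighbour value dj,
  pb = (j \<in> Pbar_i), pt = (j \<in> Ptilde_i).\<close>
definition upd_entry :: "scope \<Rightarrow> real \<Rightarrow> bool \<Rightarrow> bool \<Rightarrow> 'v \<Rightarrow> 'v \<Rightarrow> ('v \<Rightarrow> 'v \<Rightarrow> real) \<Rightarrow> 'v \<Rightarrow> 'v \<Rightarrow> real" where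
  "upd_entry sc \<gamma> pb pt di dj m x y = \<gamma> * m x y +
     (case sc of
        Cel \<Rightarrow> (if (pb \<or> pt) \<and> x = di \<and> y = dj then 1 else 0)
      | Tab \<Rightarrow> (if pb \<or> pt then 1 else 0)
      | Row \<Rightarrow> (if pb \<and> x = di then 1 else 0) + (if pt \<and> y = dj then 1 else 0)
               - (if pb \<and> pt \<and> x = di \<and> y = dj then 1 else 0)
      | Col \<Rightarrow> (if pb \<and> y = dj then 1 else 0) + (if pt \<and> x = di then 1 else 0)
               - (if pb \<and> pt \<and> x = di \<and> y = dj then 1 else 0))"

text \<open>All random choices / tie-breaks are
  nondeterministic: dstar i is any minimiser; mv i says whether agent i moves
  (it may move only if its gain is positive and maximal among its neighbourhood,
  and must move if its gain is positive and strictly maximal); viol i j is the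
  outcome of the coin declaring f_ij violated, which may be true only if eta > 0
  and must be true if eta = 1.\<close>
definition dgls_round ::
  "manner \<Rightarrow> real \<Rightarrow> scope \<Rightarrow> 'a set \<Rightarrow> ('a \<Rightarrow> 'v set) \<Rightarrow> ('a \<Rightarrow> 'a set)
    \<Rightarrow> ('a \<Rightarrow> 'a \<Rightarrow> 'v \<Rightarrow> 'v \<Rightarrow> real)
    \<Rightarrow> ('a \<Rightarrow> 'v) \<times> ('a, 'v) modifiers \<Rightarrow> ('a \<Rightarrow> 'v) \<times> ('a, 'v) modifiers \<Rightarrow> bool" where
  "dgls_round mn \<gamma> sc A D N f s s' \<longleftrightarrow>
     (let d = fst s; M = snd s; \<Delta> = gain mn D N f M d in
      \<exists>dstar mv viol.
        (\<forall>i\<in>A. dstar i \<in> best_values mn D N f M d i) \<and>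
        (\<forall>i\<in>A. mv i \<longrightarrow> \<Delta> i > 0 \<and> (\<forall>j\<in>N i. \<Delta> j \<le> \<Delta> i)) \<and>
        (\<forall>i\<in>A. \<Delta> i > 0 \<and> (\<forall>j\<in>N i. \<Delta> j < \<Delta> i) \<longrightarrow> mv i) \<and>
        (\<forall>i\<in>A. \<forall>j\<in>N i. (viol i j \<longrightarrow> eta D f i j (d i) (d j) > 0) \<and>
                          (eta D f i j (d i) (d j) = 1 \<longrightarrow> viol i j)) \<and>
        (let Pbar = (\<lambda>i. {j \<in> N i. \<not> mv i \<and> (\<forall>k\<in>N i. \<Delta> k \<le> 0) \<and> viol i j});
             Ptil = (\<lambda>i. {j \<in> N i. i \<in> Pbar j});
             d' = (\<lambda>i. if i \<in> A \<and> mv i then dstar i else d i)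
         in fst s' = d' \<and>
            snd s' = (\<lambda>i j. if i \<in> A \<and> j \<in> N i
                            then upd_entry sc \<gamma> (j \<in> Pbar i) (j \<in> Ptil i) (d' i) (d' j) (M i j)
                            else M i j)))"

text \<open>An execution: s k is the state (values, modifiers) at the beginning of round k+1.\<close>
definition dgls_run ::
  "manner \<Rightarrow> real \<Rightarrow> scope \<Rightarrow> 'a set \<Rightarrow> ('a \<Rightarrow> 'v set) \<Rightarrow> ('a \<Rightarrow> 'a set)
    \<Rightarrow> ('a \<Rightarrow> 'a \<Rightarrow> 'v \<Rightarrow> 'v \<Rightarrow> real) \<Rightarrow> (nat \<Rightarrow> ('a \<Rightarrow> 'v) \<times> ('a, 'v) modifiers) \<Rightarrow> bool" where
  "dgls_run mn \<gamma> sc A D N f s \<longleftrightarrow>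
     (\<forall>i\<in>A. fst (s 0) i \<in> D i) \<and> snd (s 0) = (\<lambda>i j x y. 0) \<and>
     (\<forall>k. dgls_round mn \<gamma> sc A D N f (s k) (s (Suc k)))"

end

theory Submission
  imports Defs
begin

text \<open>Agent i updates its modifier for j from its own value, the value of j and the two
  flags j \<in> Pbar i, j \<in> Ptil i; agent j updates its modifier for i from the same two
  values in swapped order and the flags i \<in> Pbar j, i \<in> Ptil j. A SYNC message is sent
  exactly when a violation is declared, so j \<in> Ptil i iff i \<in> Pbar j: the flags are
  swapped as well. Every scope is designed so that swapping both the values and the flags
  transposes the update, and evaporation commutes with transposition. Hence the symmetry,
  which holds for the zero initial modifiers, is preserved by every round.\<close>

definition transposed_modifiers ::
  "'a set \<Rightarrow> ('a \<Rightarrow> 'v set) \<Rightarrow> ('a \<Rightarrow> 'a set) \<Rightarrow> ('a, 'v) modifiers \<Rightarrow> bool" where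
  "transposed_modifiers A D N M \<longleftrightarrow>
     (\<forall>i\<in>A. \<forall>j\<in>N i. \<forall>x\<in>D i. \<forall>y\<in>D j. M i j x y = M j i y x)"

lemma upd_entry_transpose:
  assumes "m x y = m' y x"
  shows "upd_entry sc \<gamma> pb pt di dj m x y = upd_entry sc \<gamma> pt pb dj di m' y x"
  using assms by (cases sc) (auto simp: upd_entry_def)

lemma dgls_round_modifiersE:
  assumes "dgls_round mn \<gamma> sc A D N f s s'"
  obtains P :: "'a \<Rightarrow> 'a set" and d' where
    "\<And>i j. i \<in> A \<Longrightarrow> j \<in> N i \<Longrightarrow>
      snd s' i j = upd_entry sc \<gamma> (j \<in> P i) (i \<in> P j) (d' i) (d' j) (snd s i j)"
proof -
  let ?\<Delta> = "gain mn D N f (snd s) (fst s)"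
  from assms obtain dstar mv viol where upd:
    "snd s' = (\<lambda>i j. if i \<in> A \<and> j \<in> N i
       then upd_entry sc \<gamma> (j \<in> {j \<in> N i. \<not> mv i \<and> (\<forall>k\<in>N i. ?\<Delta> k \<le> 0) \<and> viol i j})
              (j \<in> {j' \<in> N i. i \<in> {j \<in> N j'. \<not> mv j' \<and> (\<forall>k\<in>N j'. ?\<Delta> k \<le> 0) \<and> viol j' j}})
              (if i \<in> A \<and> mv i then dstar i else fst s i)
              (if j \<in> A \<and> mv j then dstar j else fst s j) (snd s i j)
       else snd s i j)"
    unfolding dgls_round_def Let_def by blast
  show thesis
    by (rule that[of "\<lambda>i. {j \<in> N i. \<not> mv i \<and> (\<forall>k\<in>N i. ?\<Delta> k \<le> 0) \<and> viol i j}"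
                     "\<lambda>i. if i \<in> A \<and> mv i then dstar i else fst s i"])
       (simp add: upd)
qed

lemma transposed_modifiers_upd:
  assumes sym: "\<And>i j. i \<in> A \<Longrightarrow> j \<in> N i \<Longrightarrow> j \<in> A \<and> i \<in> N j"
    and "transposed_modifiers A D N M"
    and upd: "\<And>i j. i \<in> A \<Longrightarrow> j \<in> N i \<Longrightarrow>
      M' i j = upd_entry sc \<gamma> (j \<in> P i) (i \<in> P j) (d' i) (d' j) (M i j)"
  shows "transposed_modifiers A D N M'"
  unfolding transposed_modifiers_def
proof (intro ballI)
  fix i j x y
  assume i: "i \<in> A" and j: "j \<in> N i" and "x \<in> D i" "y \<in> D j"
  then have "M i j x y = M j i y x"
    using assms(2) unfolding transposed_modifiers_def by blast
  have "M' i j x y = upd_entry sc \<gamma> (j \<in> P i) (i \<in> P j) (d' i) (d' j) (M i j) x y"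
    using upd[OF i j] by simp
  also have "\<dots> = upd_entry sc \<gamma> (i \<in> P j) (j \<in> P i) (d' j) (d' i) (M j i) y x"
    by (rule upd_entry_transpose) fact
  also have "\<dots> = M' j i y x"
    using upd sym[OF i j] by simp
  finally show "M' i j x y = M' j i y x" .
qed

lemma dgls_round_transposed_modifiers:
  assumes "dcop A D N f"
    and "dgls_round mn \<gamma> sc A D N f s s'"
    and "transposed_modifiers A D N (snd s)"
  shows "transposed_modifiers A D N (snd s')"
proof -
  have sym: "\<And>i j. i \<in> A \<Longrightarrow> j \<in> N i \<Longrightarrow> j \<in> A \<and> i \<in> N j"
    using assms(1) unfolding dcop_def by blast
  obtain P :: "'a \<Rightarrow> 'a set" and d' where
    "\<And>i j. i \<in> A \<Longrightarrow> j \<in> N i \<Longrightarrow>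
      snd s' i j = upd_entry sc \<gamma> (j \<in> P i) (i \<in> P j) (d' i) (d' j) (snd s i j)"
    using dgls_round_modifiersE[OF assms(2)] by blast
  then show ?thesis
    using transposed_modifiers_upd[OF sym assms(3)] by blast
qed

theorem lemma1:
  fixes mn :: manner and \<gamma> :: real and sc :: scope
    and A :: "'a set" and D :: "'a \<Rightarrow> 'v set" and N :: "'a \<Rightarrow> 'a set"
    and f :: "'a \<Rightarrow> 'a \<Rightarrow> 'v \<Rightarrow> 'v \<Rightarrow> real"
    and s :: "nat \<Rightarrow> ('a \<Rightarrow> 'v) \<times> ('a, 'v) modifiers"
  assumes "dcop A D N f"
    and "dgls_run mn \<gamma> sc A D N f s"
  shows "\<forall>k. \<forall>i\<in>A. \<forall>j\<in>N i. \<forall>x\<in>D i. \<forall>y\<in>D j. snd (s k) i j x y = snd (s k) j i y x"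
proof -
  have "transposed_modifiers A D N (snd (s k))" for k
  proof (induction k)
    case 0
    show ?case
      using assms(2) by (simp add: dgls_run_def transposed_modifiers_def)
  next
    case (Suc k)
    have "dgls_round mn \<gamma> sc A D N f (s k) (s (Suc k))"
      using assms(2) by (simp add: dgls_run_def)
    then show ?case
      using Suc.IH by (rule dgls_round_transposed_modifiers[OF assms(1)])
  qed
  then show ?thesis
    unfolding transposed_modifiers_def by blast
qed

end
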